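(* Let $\mathbf{u}$ be a Sturmian sequence over $\{a,b\}$ in which the frequency of $b$ is an irrational number $\alpha\in(0,1)$. Let $\mathbf{a}=1^\omega$ and let $\mathbf{b}$ be a Sturmian sequence over $\{2,3\}$ in which the frequency of the letter $3$ is $\gamma\in(0,1)$. Let $\mathbf{v}=\mathrm{colour}(\mathbf{u},\mathbf{a},\mathbf{b})$. Then: (i) $\mathbf{v}$ is $2$-balanced, and if $\alpha\notin\{\frac{1}{1+\gamma},\frac{1}{2-\gamma}\}$ then $\mathbf{v}$ is not $1$-balanced; (ii) for every integer $n\ge1$, $$\mathcal C_{\mathbf{v}}(n)\le P_\alpha(n)+(n+1)\lceil n\alpha\rceil\qquad\text{and}\qquad \mathcal C^{ab}_{\mathbf{v}}(n)\le 4.$$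
   Context: A sequence is $C$-balanced ($C\ge1$ an integer) if for any two of its factors $u,v$ with $|u|=|v|$ and every letter $x$, $\bigl||u|_x-|v|_x\bigr|\le C$, where $|w|_x$ counts occurrences of $x$ in $w$. A Sturmian sequence is an aperiodic (not eventually periodic) $1$-balanced sequence over a two-letter alphabet; letter frequencies in it exist and are irrational. Colouring: given $\mathbf{u}$ over $\{a,b\}$ and sequences $\mathbf{a},\mathbf{b}$ over disjoint alphabets, $\mathrm{colour}(\mathbf{u},\mathbf{a},\mathbf{b})$ is obtained from $\mathbf{u}$ by replacing the subsequence of all occurrences of $a$ (in order) by $\mathbf{a}$ and the subsequence of all occurrences of $b$ (in order) by $\mathbf{b}$. The factor complexity $\mathcal C_{\mathbf{v}}(n)$ is the number of distinct factors of length $n$ of $\mathbf{v}$; the abelian complexity $\mathcal C^{ab}_{\mathbf{v}}(n)$ is the number of distinct Parikh vectors $\Psi(w)$ (vector of letter counts) of factors $w$ of length $n$. For irrational $\alpha\in(0,1)$, $P_\alpha(n)$ denotes the number of factors $u$ of length $n$ of a Sturmian sequence over $\{a,b\}$ with frequency of $b$ equal to $\alpha$ such that $(|u|_a,|u|_b)=(\lfloor(1-\alpha)n\rfloor,\lceil n\alpha\rceil)$ (this depends only on $\alpha$). *)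

theory Defs
  imports Complex_Main
begin

definition factor_at :: "(nat \<Rightarrow> 'a) \<Rightarrow> nat \<Rightarrow> nat \<Rightarrow> 'a list" where
  "factor_at u i n = map u [i..<i+n]"

definition factors :: "(nat \<Rightarrow> 'a) \<Rightarrow> nat \<Rightarrow> 'a list set" where
  "factors u n = {factor_at u i n | i. True}"

definition C_balanced :: "nat \<Rightarrow> (nat \<Rightarrow> 'a) \<Rightarrow> bool" where
  "C_balanced C u \<longleftrightarrow> (\<forall>n x y z. x \<in> factors u n \<longrightarrow> y \<in> factors u n \<longrightarrow>
       \<bar>int (count_list x z) - int (count_list y z)\<bar> \<le> int C)"

definition eventually_periodic :: "(nat \<Rightarrow> 'a) \<Rightarrow> bool" where
  "eventually_periodic u \<longleftrightarrow> (\<exists>p>0. \<exists>N. \<forall>n\<ge>N. u (n + p) = u n)"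

definition sturmian :: "(nat \<Rightarrow> 'a) \<Rightarrow> 'a \<Rightarrow> 'a \<Rightarrow> bool" where
  "sturmian u a b \<longleftrightarrow> a \<noteq> b \<and> range u \<subseteq> {a, b} \<and> \<not> eventually_periodic u \<and> C_balanced 1 u"

definition has_freq :: "(nat \<Rightarrow> 'a) \<Rightarrow> 'a \<Rightarrow> real \<Rightarrow> bool" where
  "has_freq u x f \<longleftrightarrow> (\<lambda>n. real (count_list (factor_at u 0 n) x) / real n) \<longlonglongrightarrow> f"

text \<open>colour(u, A, B): the k-th occurrence of a is replaced by A k, the k-th occurrence of b by B k.\<close>
definition colour :: "(nat \<Rightarrow> 'a) \<Rightarrow> 'a \<Rightarrow> (nat \<Rightarrow> 'b) \<Rightarrow> (nat \<Rightarrow> 'b) \<Rightarrow> nat \<Rightarrow> 'b" where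
  "colour u a A B n = (if u n = a then A (count_list (factor_at u 0 n) a)
                       else B (count_list (factor_at u 0 n) (u n)))"

definition factor_complexity :: "(nat \<Rightarrow> 'a) \<Rightarrow> nat \<Rightarrow> nat" where
  "factor_complexity u n = card (factors u n)"

definition parikh :: "'a list \<Rightarrow> 'a \<Rightarrow> nat" where
  "parikh w = (\<lambda>x. count_list w x)"

definition abelian_complexity :: "(nat \<Rightarrow> 'a) \<Rightarrow> nat \<Rightarrow> nat" where
  "abelian_complexity u n = card (parikh ` factors u n)"

text \<open>P_alpha(n), computed from a Sturmian sequence u over {a,b} with frequency of b equal to alpha
  (the value depends only on alpha).\<close>
definition P_alpha :: "(nat \<Rightarrow> 'a) \<Rightarrow> 'a \<Rightarrow> 'a \<Rightarrow> real \<Rightarrow> nat \<Rightarrow> nat" where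
  "P_alpha u a b \<alpha> n = card {w \<in> factors u n.
       int (count_list w a) = \<lfloor>(1 - \<alpha>) * real n\<rfloor> \<and> int (count_list w b) = \<lceil>real n * \<alpha>\<rceil>}"

end

theory Submission
  imports Defs "HOL-Analysis.Kronecker_Approximation_Theorem"
begin

(*
  A factor of v arises from a factor of u by colouring its letters b with a factor of bb of the
  same length as their number. As u and bb are balanced, the number of b's, and the number of 3's
  among them, each take one of two consecutive values. This gives the 2-balance, at most four
  Parikh vectors, and (a balanced binary sequence having at most k + 1 factors of length k) the
  bound on the factor complexity.

  If v were 1-balanced, the discrepancies |v[0,i)|_x - f_x i of its three letters would all have
  oscillation at most 1. Kronecker's theorem for the frequencies (1 - alpha, gamma alpha) of the
  letters 1 and 3 shows that this forces one of five linear relations between them; two are the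
  excluded values of alpha, and the other three produce a letter of frequency 1/2, in bb (making it
  eventually periodic) or in v (contradicting the irrationality of 1 - alpha).
*)

section \<open>Factors and occurrence counts\<close>

definition occ :: "(nat \<Rightarrow> 'a) \<Rightarrow> 'a \<Rightarrow> nat \<Rightarrow> nat \<Rightarrow> nat" where
  "occ w x i n = count_list (factor_at w i n) x"

lemma factor_at_0 [simp]: "factor_at w i 0 = []"
  by (simp add: factor_at_def)

lemma factor_at_Suc: "factor_at w i (Suc n) = w i # factor_at w (Suc i) n"
  unfolding factor_at_def by (simp add: upt_rec)

lemma factor_at_Suc_snoc: "factor_at w i (Suc n) = factor_at w i n @ [w (i + n)]"
  unfolding factor_at_def by simp

lemma factor_at_add: "factor_at w i (n + m) = factor_at w i n @ factor_at w (i + n) m"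
  unfolding factor_at_def using upt_add_eq_append[of i "i + n" m] by (simp add: add.assoc)

lemma length_factor_at [simp]: "length (factor_at w i n) = n"
  by (simp add: factor_at_def)

lemma set_factor_at: "set (factor_at w i n) = w ` {i..<i + n}"
  by (simp add: factor_at_def)

lemma factor_at_in_factors [simp]: "factor_at w i n \<in> factors w n"
  by (auto simp: factors_def)

lemma mem_factors_iff: "y \<in> factors w n \<longleftrightarrow> (\<exists>i. y = factor_at w i n)"
  by (auto simp: factors_def)

lemma length_mem_factors: "xs \<in> factors w n \<Longrightarrow> length xs = n"
  by (auto simp: mem_factors_iff)

lemma set_mem_factors: "xs \<in> factors w n \<Longrightarrow> set xs \<subseteq> range w"
  by (auto simp: mem_factors_iff set_factor_at)

lemma finite_factors:
  assumes "range w \<subseteq> A" "finite A"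
  shows "finite (factors w n)"
proof (rule finite_subset)
  show "factors w n \<subseteq> {xs. set xs \<subseteq> A \<and> length xs = n}"
    using assms(1) set_mem_factors length_mem_factors by fastforce
  show "finite {xs. set xs \<subseteq> A \<and> length xs = n}"
    by (rule finite_lists_length_eq[OF assms(2)])
qed

lemma factor_suffix_in_factors:
  assumes "xs @ ys \<in> factors w n"
  shows "ys \<in> factors w (length ys)"
proof -
  obtain i where i: "xs @ ys = factor_at w i n"
    using assms by (auto simp: mem_factors_iff)
  then have "n = length xs + length ys"
    by (metis length_append length_factor_at)
  with i have "ys = factor_at w (i + length xs) (length ys)"
    by (simp add: factor_at_add append_eq_append_conv)
  then show ?thesis by (metis factor_at_in_factors)
qed

lemma same_length_neq_common_suffix:
  "length xs = length ys \<Longrightarrow> xs \<noteq> ys \<Longrightarrow>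
   \<exists>p p' x y s. xs = p @ [x] @ s \<and> ys = p' @ [y] @ s \<and> x \<noteq> y"
proof (induction xs arbitrary: ys rule: rev_induct)
  case (snoc z zs)
  obtain ys' y where ys: "ys = ys' @ [y]"
    using snoc.prems(1) by (cases ys rule: rev_cases) auto
  show ?case
  proof (cases "z = y")
    case False
    then show ?thesis
      using ys by (intro exI[of _ zs] exI[of _ ys'] exI[of _ z] exI[of _ y] exI[of _ "[]"]) simp
  next
    case True
    with snoc.prems ys have "length zs = length ys'" "zs \<noteq> ys'" by auto
    then obtain p p' x y' s where zs: "zs = p @ [x] @ s" and ys': "ys' = p' @ [y'] @ s" and "x \<noteq> y'"
      using snoc.IH by blast
    then show ?thesis
      using True by (intro exI[of _ p] exI[of _ p'] exI[of _ x] exI[of _ y'] exI[of _ "s @ [y]"])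
        (simp add: zs ys' ys)
  qed
qed simp

lemma occ_0 [simp]: "occ w x i 0 = 0"
  by (simp add: occ_def)

lemma occ_Suc: "occ w x i (Suc n) = occ w x i n + (if w (i + n) = x then 1 else 0)"
  by (simp add: occ_def factor_at_Suc_snoc)

lemma occ_Suc_left: "occ w x i (Suc n) = (if w i = x then 1 else 0) + occ w x (Suc i) n"
  by (simp add: occ_def factor_at_Suc)

lemma occ_add: "occ w x i (n + m) = occ w x i n + occ w x (i + n) m"
  by (simp add: occ_def factor_at_add)

lemma occ_le: "occ w x i n \<le> n"
  unfolding occ_def by (metis count_le_length length_factor_at)

lemma occ_blocks: "occ w x r (k * n) = (\<Sum>j<k. occ w x (r + j * n) n)"
proof (induction k)
  case (Suc k)
  have "occ w x r (Suc k * n) = occ w x r (k * n) + occ w x (r + k * n) n"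
    using occ_add[of w x r "k * n" n] by (simp add: add.commute)
  then show ?case using Suc by simp
qed simp

lemma binary_occ_complement:
  assumes "\<And>i. w i = a \<or> w i = b" "a \<noteq> b"
  shows "occ w a i n = n - occ w b i n"
proof (induction n)
  case (Suc n)
  have "occ w b i n \<le> n" by (rule occ_le)
  then show ?case using Suc assms by (auto simp: occ_Suc)
qed simp

lemma binary_occ_other:
  assumes "\<And>i. w i = a \<or> w i = b" "z \<noteq> a" "z \<noteq> b"
  shows "occ w z i n = 0"
  by (induction n) (use assms in \<open>auto simp: occ_Suc\<close>)

section \<open>Balanced sequences\<close>

lemma balanced_occ_diff:
  assumes "C_balanced C w"
  shows "\<bar>int (occ w x i n) - int (occ w x j n)\<bar> \<le> int C"
  using assms unfolding C_balanced_def occ_def by (meson factor_at_in_factors)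

lemma balanced_occ_values:
  assumes "C_balanced 1 w"
  obtains m where "\<And>i. occ w x i n \<in> {m, m + 1}"
proof -
  define m where "m = (LEAST k. \<exists>j. k = occ w x j n)"
  obtain j where j: "m = occ w x j n"
    using LeastI_ex[of "\<lambda>k. \<exists>j. k = occ w x j n"] unfolding m_def by blast
  have "occ w x i n \<in> {m, m + 1}" for i
  proof -
    have "m \<le> occ w x i n"
      unfolding m_def by (rule Least_le) blast
    moreover have "occ w x i n \<le> occ w x j n + 1"
      using balanced_occ_diff[OF assms, of x i n j] by simp
    ultimately show ?thesis using j by auto
  qed
  then show thesis by (rule that)
qed

lemma balanced_occ_diff_length:
  assumes "C_balanced 1 w" "n' \<le> n + 1" "n \<le> n' + 1"
  shows "\<bar>int (occ w x i n) - int (occ w x j n')\<bar> \<le> 2"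
proof -
  have "occ w x j (n + 1) \<le> occ w x j n + 1" "occ w x j n \<le> occ w x j (n + 1)"
       "occ w x i (n' + 1) \<le> occ w x i n' + 1" "occ w x i n' \<le> occ w x i (n' + 1)"
    by (auto simp: occ_Suc)
  moreover have "n' = n \<or> n' = n + 1 \<or> n = n' + 1" using assms by auto
  ultimately show ?thesis
    using balanced_occ_diff[OF assms(1), of x i n j] balanced_occ_diff[OF assms(1), of x i n' j]
    by (auto simp: abs_le_iff)
qed

lemma balanced_occ_near_freq:
  assumes bal: "C_balanced 1 w"
    and freq: "(\<lambda>n. real (occ w x 0 n) / real n) \<longlonglongrightarrow> f"
  shows "\<bar>real (occ w x i n) - real n * f\<bar> \<le> 1"
proof (cases "n = 0")
  case False
  define c where "c = real (occ w x i n)"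
  have block: "\<bar>real (occ w x j n) - c\<bar> \<le> 1" for j
    using balanced_occ_diff[OF bal, of x j n i] unfolding c_def by linarith
  \<comment> \<open>the prefix of length \<open>k * n\<close> consists of \<open>k\<close> blocks, each within 1 of \<open>c\<close>\<close>
  have avg: "\<bar>real (occ w x 0 (k * n)) / real (k * n) - c / real n\<bar> \<le> 1 / real n"
    if "k \<ge> 1" for k
  proof -
    have "\<bar>real (occ w x 0 (k * n)) - real k * c\<bar> = \<bar>\<Sum>j<k. real (occ w x (j * n) n) - c\<bar>"
      by (simp add: occ_blocks[of w x 0] sum_subtractf)
    also have "\<dots> \<le> (\<Sum>j<k. \<bar>real (occ w x (j * n) n) - c\<bar>)"
      by (rule sum_abs)
    also have "\<dots> \<le> real k"
      using sum_bounded_above[of "{..<k}" "\<lambda>j. \<bar>real (occ w x (j * n) n) - c\<bar>" 1] block by simp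
    moreover have "real (occ w x 0 (k * n)) / real (k * n) - c / real n
        = (real (occ w x 0 (k * n)) - real k * c) / real (k * n)"
      using False that by (simp add: field_simps)
    ultimately show ?thesis
      using False that by (simp add: abs_divide field_simps)
  qed
  have "filterlim (\<lambda>k. k * n) at_top at_top"
    using False by (intro filterlim_subseq) (auto simp: strict_mono_def)
  from filterlim_compose[OF freq this]
  have "(\<lambda>k. real (occ w x 0 (k * n)) / real (k * n) - c / real n) \<longlonglongrightarrow> f - c / real n"
    by (intro tendsto_diff) (simp_all add: o_def)
  then have "\<bar>f - c / real n\<bar> \<le> 1 / real n"
    by (rule tendsto_upperbound[OF tendsto_rabs])
       (use avg in \<open>auto simp: eventually_at_top_linorder\<close>)
  then show ?thesis
    using False unfolding c_def[symmetric] by (simp add: field_simps abs_le_iff)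
qed simp

text \<open>Two different right special factors of the same length would end in \<open>x s\<close> and \<open>y s\<close>
  with \<open>x \<noteq> y\<close>, making both \<open>a s a\<close> and \<open>b s b\<close> factors.\<close>

lemma balanced_right_special_unique:
  assumes bin: "\<And>i. w i = a \<or> w i = b" and ab: "a \<noteq> b" and bal: "C_balanced 1 w"
    and xs: "xs @ [a] \<in> factors w (Suc n)" "xs @ [b] \<in> factors w (Suc n)"
    and ys: "ys @ [a] \<in> factors w (Suc n)" "ys @ [b] \<in> factors w (Suc n)"
  shows "xs = ys"
proof (rule ccontr)
  assume "xs \<noteq> ys"
  moreover have "length xs = length ys"
    using length_mem_factors[OF xs(1)] length_mem_factors[OF ys(1)] by simp
  ultimately obtain p p' x y s where d: "xs = p @ [x] @ s" "ys = p' @ [y] @ s" "x \<noteq> y"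
    by (metis same_length_neq_common_suffix)
  obtain k l where "x = w k" "y = w l"
    using set_mem_factors[OF xs(1)] set_mem_factors[OF ys(1)] d by auto
  then have xy: "x = a \<and> y = b \<or> x = b \<and> y = a"
    using bin[of k] bin[of l] d(3) by auto
  have x_ext: "x # s @ [c] \<in> factors w (length s + 2)" if "xs @ [c] \<in> factors w (Suc n)" for c
    using factor_suffix_in_factors[of p "x # s @ [c]"] that d(1) by simp
  have y_ext: "y # s @ [c] \<in> factors w (length s + 2)" if "ys @ [c] \<in> factors w (Suc n)" for c
    using factor_suffix_in_factors[of p' "y # s @ [c]"] that d(2) by simp
  have "a # s @ [a] \<in> factors w (length s + 2) \<and> b # s @ [b] \<in> factors w (length s + 2)"
    using xy x_ext[OF xs(1)] x_ext[OF xs(2)] y_ext[OF ys(1)] y_ext[OF ys(2)] by (elim disjE) simp_all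
  then have "\<bar>int (count_list (a # s @ [a]) a) - int (count_list (b # s @ [b]) a)\<bar> \<le> int 1"
    using bal unfolding C_balanced_def by blast
  then show False using ab by simp
qed

lemma balanced_binary_card_factors:
  assumes bin: "\<And>i. w i = a \<or> w i = b" and ab: "a \<noteq> b" and bal: "C_balanced 1 w"
  shows "card (factors w n) \<le> n + 1"
proof (induction n)
  case 0
  have "factors w 0 = {[]}" by (auto simp: mem_factors_iff)
  then show ?case by simp
next
  case (Suc n)
  have fin: "finite (factors w m)" for m
    by (rule finite_factors[of w "{a, b}"]) (use bin in auto)
  define X where "X c = {xs \<in> factors w n. xs @ [c] \<in> factors w (Suc n)}" for c
  have finX: "finite (X c)" for c
    using fin[of n] unfolding X_def by auto
  have cover: "factors w (Suc n) \<subseteq> (\<lambda>xs. xs @ [a]) ` X a \<union> (\<lambda>xs. xs @ [b]) ` X b"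
  proof
    fix ys assume "ys \<in> factors w (Suc n)"
    then obtain i where ys: "ys = factor_at w i n @ [w (i + n)]"
      by (auto simp: mem_factors_iff factor_at_Suc_snoc)
    with \<open>ys \<in> factors w (Suc n)\<close> have "factor_at w i n \<in> X (w (i + n))"
      by (simp add: X_def)
    then show "ys \<in> (\<lambda>xs. xs @ [a]) ` X a \<union> (\<lambda>xs. xs @ [b]) ` X b"
      using ys bin[of "i + n"] by auto
  qed
  have "card (factors w (Suc n)) \<le> card ((\<lambda>xs. xs @ [a]) ` X a \<union> (\<lambda>xs. xs @ [b]) ` X b)"
    by (rule card_mono[OF _ cover]) (simp add: finX)
  also have "\<dots> \<le> card ((\<lambda>xs. xs @ [a]) ` X a) + card ((\<lambda>xs. xs @ [b]) ` X b)"
    by (rule card_Un_le)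
  also have "\<dots> \<le> card (X a) + card (X b)"
    by (intro add_mono card_image_le finX)
  also have "\<dots> = card (X a \<union> X b) + card (X a \<inter> X b)"
    by (rule card_Un_Int[OF finX finX])
  also have "card (X a \<union> X b) \<le> card (factors w n)"
    by (rule card_mono[OF fin]) (auto simp: X_def)
  also have "card (X a \<inter> X b) \<le> Suc 0"
    using balanced_right_special_unique[OF bin ab bal] finX
    by (subst card_le_Suc0_iff_eq) (auto simp: X_def)
  finally show ?case using Suc by simp
qed

lemma frequently_even_gap:
  fixes P :: "nat \<Rightarrow> bool"
  assumes "\<And>K. \<exists>i\<ge>K. P i"
  obtains p l where "P p" "P (p + 2 + 2 * l)"
proof -
  have gap: "\<exists>p l. P p \<and> P (p + 2 + 2 * l)" if "P q" "P r" "q + 2 \<le> r" "even (r - q)" for q r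
  proof -
    obtain k where "r - q = 2 * k" using \<open>even (r - q)\<close> by (elim evenE)
    then have "r = q + 2 + 2 * (k - 1)" using \<open>q + 2 \<le> r\<close> by simp
    then show ?thesis using that(1,2) by blast
  qed
  obtain i1 where i1: "P i1" using assms by blast
  obtain i2 where i2: "P i2" "i1 + 2 \<le> i2" using assms[of "i1 + 2"] by blast
  obtain i3 where i3: "P i3" "i2 + 2 \<le> i3" using assms[of "i2 + 2"] by blast
  have "i3 - i1 = (i3 - i2) + (i2 - i1)" using i2 i3 by simp
  then have "even (i2 - i1) \<or> even (i3 - i2) \<or> even (i3 - i1)" by auto
  then have "\<exists>p l. P p \<and> P (p + 2 + 2 * l)" using gap i1 i2 i3 by auto
  then show thesis using that by blast
qed

text \<open>With frequency \<open>1/2\<close>, a factor of length \<open>2 (l + 2)\<close> contains between \<open>l + 1\<close> and \<open>l + 3\<close>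
  occurrences. All length-2 windows contain \<open>m\<close> or \<open>m + 1\<close> occurrences, so two windows different
  from \<open>1\<close> at even distance (both \<open>2\<close> if \<open>m \<ge> 1\<close>, both \<open>0\<close> if \<open>m = 0\<close>) violate this bound.\<close>

lemma balanced_half_freq_alternates:
  assumes bal: "C_balanced 1 w"
    and freq: "(\<lambda>n. real (occ w x 0 n) / real n) \<longlonglongrightarrow> 1/2"
  shows "\<exists>K. \<forall>i\<ge>K. occ w x i 2 = 1"
proof (rule ccontr)
  assume "\<not> ?thesis"
  then have "\<And>K. \<exists>i\<ge>K. occ w x i 2 \<noteq> 1" by auto
  then obtain p l where ends: "occ w x p 2 \<noteq> 1" "occ w x (p + 2 + 2 * l) 2 \<noteq> 1"
    by (rule frequently_even_gap)
  have middle: "occ w x (p + 2) (2 * l) = (\<Sum>j<l. occ w x (p + 2 + j * 2) 2)"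
    using occ_blocks[of w x "p + 2" l 2] by (simp add: mult.commute)
  have "occ w x p (2 * (l + 2)) = occ w x p 2 + occ w x (p + 2) (2 * l) + occ w x (p + 2 + 2 * l) 2"
    using occ_add[of w x p 2 "2 * l + 2"] occ_add[of w x "p + 2" "2 * l" 2] by (simp add: algebra_simps)
  with middle have total: "occ w x p (2 * (l + 2))
      = occ w x p 2 + (\<Sum>j<l. occ w x (p + 2 + j * 2) 2) + occ w x (p + 2 + 2 * l) 2"
    by simp
  have "\<bar>real (occ w x p (2 * (l + 2))) - real (l + 2)\<bar> \<le> 1"
    using balanced_occ_near_freq[OF bal freq, of p "2 * (l + 2)"] by (simp add: field_simps)
  then have near: "l + 1 \<le> occ w x p (2 * (l + 2))" "occ w x p (2 * (l + 2)) \<le> l + 3"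
    unfolding abs_le_iff by linarith+
  obtain m where m: "\<And>i. occ w x i 2 \<in> {m, m + 1}"
    using balanced_occ_values[OF bal] by blast
  show False
  proof (cases "m = 0")
    case True
    then have "occ w x i 2 \<le> 1" for i using m[of i] by auto
    then have "occ w x p 2 = 0" "occ w x (p + 2 + 2 * l) 2 = 0"
      "(\<Sum>j<l. occ w x (p + 2 + j * 2) 2) \<le> l"
      using ends sum_bounded_above[of "{..<l}" "\<lambda>j. occ w x (p + 2 + j * 2) 2" 1]
      by (auto simp: le_Suc_eq)
    then show False using total near by simp
  next
    case False
    then have ge: "1 \<le> occ w x i 2" for i
      using m[of i] by auto
    have "occ w x i 2 = 2" if "occ w x i 2 \<noteq> 1" for i
      using that ge[of i] occ_le[of w x i 2] by linarith
    then have "occ w x p 2 = 2" "occ w x (p + 2 + 2 * l) 2 = 2"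
      using ends by blast+
    moreover have "l \<le> (\<Sum>j<l. occ w x (p + 2 + j * 2) 2)"
      using sum_bounded_below[of "{..<l}" 1 "\<lambda>j. occ w x (p + 2 + j * 2) 2"] ge by simp
    ultimately show False using total near by simp
  qed
qed

lemma half_freq_balanced_binary_eventually_periodic:
  assumes bin: "\<And>i. w i = x \<or> w i = y" and bal: "C_balanced 1 w"
    and freq: "(\<lambda>n. real (occ w x 0 n) / real n) \<longlonglongrightarrow> 1/2"
  shows "eventually_periodic w"
proof -
  obtain K where K: "\<And>i. i \<ge> K \<Longrightarrow> occ w x i 2 = 1"
    using balanced_half_freq_alternates[OF bal freq] by blast
  have pair: "occ w x i 2 = (if w i = x then 1 else 0) + (if w (Suc i) = x then 1 else 0)" for i
    by (simp add: numeral_2_eq_2 occ_Suc)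
  have "w (i + 2) = w i" if "i \<ge> K" for i
  proof -
    have "(if w i = x then 1 else 0) + (if w (Suc i) = x then 1 else 0) = (1::nat)"
      "(if w (Suc i) = x then 1 else 0) + (if w (Suc (Suc i)) = x then 1 else 0) = (1::nat)"
      using K[of i] K[of "Suc i"] that unfolding pair by simp_all
    then have "w i = x \<longleftrightarrow> w (Suc (Suc i)) = x"
      by (cases "w i = x"; cases "w (Suc i) = x"; cases "w (Suc (Suc i)) = x") simp_all
    then show ?thesis
      using bin[of i] bin[of "i + 2"] by auto
  qed
  then show ?thesis
    unfolding eventually_periodic_def by (intro exI[of _ 2] conjI exI[of _ K]) auto
qed

lemma int_near_non_integer:
  fixes c :: int and x :: real
  assumes "\<bar>of_int c - x\<bar> \<le> 1" "x \<notin> \<int>"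
  shows "c = \<lceil>x\<rceil> \<or> c = \<lceil>x\<rceil> - 1"
proof -
  have "x \<noteq> of_int (c - 1)" "x \<noteq> of_int (c + 1)"
    using assms(2) by (metis Ints_of_int)+
  then have "x - 1 < of_int c" "of_int c < x + 1"
    using assms(1) by (auto simp: abs_le_iff)
  then have "\<lceil>x\<rceil> \<le> c + 1" "c \<le> \<lceil>x\<rceil>"
    by (auto simp: ceiling_le_iff le_ceiling_iff)
  then show ?thesis by auto
qed

lemma irrational_mult_not_Ints:
  assumes "\<alpha> \<notin> \<rat>" "n \<noteq> 0"
  shows "real n * \<alpha> \<notin> \<int>"
proof
  assume "real n * \<alpha> \<in> \<int>"
  then have "real n * \<alpha> / real n \<in> \<rat>"
    using Ints_subset_Rats by (intro Rats_divide) auto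
  with assms show False by simp
qed

lemma balanced_occ_ceiling:
  assumes "C_balanced 1 w" "(\<lambda>n. real (occ w x 0 n) / real n) \<longlonglongrightarrow> \<alpha>" "\<alpha> \<notin> \<rat>" "n \<noteq> 0"
  shows "int (occ w x i n) = \<lceil>real n * \<alpha>\<rceil> \<or> int (occ w x i n) = \<lceil>real n * \<alpha>\<rceil> - 1"
  using balanced_occ_near_freq[OF assms(1,2)] irrational_mult_not_Ints[OF assms(3,4)]
  by (intro int_near_non_integer) simp_all

lemma floor_one_minus_mult: "\<lfloor>(1 - \<alpha>) * real n\<rfloor> = int n - \<lceil>real n * \<alpha>\<rceil>"
proof -
  have "(1 - \<alpha>) * real n = - (real n * \<alpha>) + of_int (int n)"
    by (simp add: algebra_simps)
  then have "\<lfloor>(1 - \<alpha>) * real n\<rfloor> = \<lfloor>- (real n * \<alpha>)\<rfloor> + int n"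
    by (metis floor_add_int)
  then show ?thesis
    by (simp add: ceiling_def)
qed

section \<open>The colouring\<close>

fun colour_list :: "'a \<Rightarrow> 'a list \<Rightarrow> nat list \<Rightarrow> nat list" where
  "colour_list a [] ys = []"
| "colour_list a (x # xs) ys =
     (if x = a then 1 # colour_list a xs ys else hd ys # colour_list a xs (tl ys))"

locale binary_colouring =
  fixes u :: "nat \<Rightarrow> 'a" and a b :: 'a and bb :: "nat \<Rightarrow> nat"
  assumes a_neq_b: "a \<noteq> b" and u_binary: "\<And>i. u i = a \<or> u i = b"
    and u_balanced: "C_balanced 1 u"
    and bb_binary: "\<And>i. bb i = 2 \<or> bb i = 3" and bb_balanced: "C_balanced 1 bb"
begin

definition v :: "nat \<Rightarrow> nat" where
  "v = colour u a (\<lambda>_. 1) bb"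

definition b_before :: "nat \<Rightarrow> nat" where
  "b_before i = occ u b 0 i"

lemma v_eq: "v i = (if u i = a then 1 else bb (b_before i))"
  using u_binary[of i] by (auto simp: v_def colour_def b_before_def occ_def)

lemma b_before_0 [simp]: "b_before 0 = 0"
  by (simp add: b_before_def)

lemma b_before_Suc: "b_before (Suc i) = b_before i + (if u i = b then 1 else 0)"
  by (simp add: b_before_def occ_Suc)

lemma occ_v:
  "occ v z i n = (if z = 1 then occ u a i n else occ bb z (b_before i) (occ u b i n))"
proof (induction n arbitrary: i)
  case (Suc n)
  show ?case
  proof (cases "u i = a")
    case True
    then have "u i \<noteq> b" "v i = 1" using a_neq_b v_eq[of i] by simp_all
    with True show ?thesis
      using Suc[of "Suc i"] by (simp add: occ_Suc_left b_before_Suc)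
  next
    case False
    then have "u i = b" "v i = bb (b_before i)" "bb (b_before i) \<noteq> 1"
      using u_binary[of i] bb_binary[of "b_before i"] v_eq[of i] by auto
    with False show ?thesis
      using Suc[of "Suc i"] by (simp add: occ_Suc_left b_before_Suc)
  qed
qed simp

lemma colour_balanced_2: "C_balanced 2 v"
  unfolding C_balanced_def
proof (intro allI impI)
  fix n xs ys z
  assume "xs \<in> factors v n" "ys \<in> factors v n"
  then obtain i j where "xs = factor_at v i n" "ys = factor_at v j n"
    by (auto simp: mem_factors_iff)
  then have xs: "count_list xs z = occ v z i n" and ys: "count_list ys z = occ v z j n"
    by (simp_all add: occ_def)
  have "\<bar>int (occ u b i n) - int (occ u b j n)\<bar> \<le> 1"
    using balanced_occ_diff[OF u_balanced] by simp
  then have "occ u b j n \<le> occ u b i n + 1" "occ u b i n \<le> occ u b j n + 1"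
    by auto
  then show "\<bar>int (count_list xs z) - int (count_list ys z)\<bar> \<le> int 2"
    using balanced_occ_diff[OF u_balanced, of a i n j] balanced_occ_diff_length[OF bb_balanced]
    unfolding xs ys occ_v by auto
qed

lemma parikh_factor_v:
  "parikh (factor_at v i n) =
     (let k = occ u b i n; d = occ bb 3 (b_before i) k in
      (\<lambda>z. if z = 1 then n - k else if z = 3 then d else if z = 2 then k - d else 0))"
  unfolding parikh_def Let_def occ_def[symmetric] occ_v
  using binary_occ_complement[where w = u, OF u_binary a_neq_b]
    binary_occ_complement[where w = bb, OF bb_binary] binary_occ_other[where w = bb, OF bb_binary]
  by (intro ext) auto

text \<open>A Parikh vector of a factor of \<open>v\<close> is determined by the number of \<open>b\<close>s of the underlying factor
  of \<open>u\<close> and the number of \<open>3\<close>s among them, and each of these takes only two values.\<close>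

lemma colour_abelian_complexity: "abelian_complexity v n \<le> 4"
proof -
  define \<phi> where "\<phi> k d = (\<lambda>z::nat. if z = 1 then n - k else if z = 3 then d else if z = 2 then k - d else 0)"
    for k d
  obtain m where m: "\<And>i. occ u b i n \<in> {m, m + 1}"
    using balanced_occ_values[OF u_balanced] by blast
  have "\<exists>d. \<forall>p. occ bb 3 p k \<in> {d, d + 1}" for k
    using balanced_occ_values[OF bb_balanced] by metis
  then obtain d where d: "\<And>k p. occ bb 3 p k \<in> {d k, d k + 1}"
    by metis
  have "parikh ` factors v n \<subseteq> {\<phi> m (d m), \<phi> m (d m + 1), \<phi> (m + 1) (d (m + 1)), \<phi> (m + 1) (d (m + 1) + 1)}"
  proof
    fix P assume "P \<in> parikh ` factors v n"
    then obtain i where "P = parikh (factor_at v i n)"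
      by (auto simp: mem_factors_iff)
    then have "P = \<phi> (occ u b i n) (occ bb 3 (b_before i) (occ u b i n))"
      unfolding parikh_factor_v \<phi>_def Let_def by simp
    then show "P \<in> {\<phi> m (d m), \<phi> m (d m + 1), \<phi> (m + 1) (d (m + 1)), \<phi> (m + 1) (d (m + 1) + 1)}"
      using m[of i] d[of "b_before i" m] d[of "b_before i" "m + 1"] by auto
  qed
  then have "card (parikh ` factors v n) \<le> card {\<phi> m (d m), \<phi> m (d m + 1), \<phi> (m + 1) (d (m + 1)), \<phi> (m + 1) (d (m + 1) + 1)}"
    by (rule card_mono[rotated]) simp
  also have "\<dots> \<le> 4"
    by (simp add: card_insert_if)
  finally show ?thesis
    by (simp add: abelian_complexity_def)
qed

lemma factor_at_v:
  "factor_at v i n = colour_list a (factor_at u i n) (factor_at bb (b_before i) (occ u b i n))"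
proof (induction n arbitrary: i)
  case (Suc n)
  show ?case
  proof (cases "u i = a")
    case True
    then have "u i \<noteq> b" "v i = 1" using a_neq_b v_eq[of i] by simp_all
    with True show ?thesis
      using Suc[of "Suc i"] by (simp add: factor_at_Suc b_before_Suc occ_Suc_left)
  next
    case False
    then have "u i = b" "v i = bb (b_before i)"
      using u_binary[of i] v_eq[of i] by auto
    with False show ?thesis
      using Suc[of "Suc i"] by (simp add: factor_at_Suc b_before_Suc occ_Suc_left)
  qed
qed simp

lemma card_factors_v_le: "card (factors v n) \<le> (\<Sum>xs\<in>factors u n. count_list xs b + 1)"
proof -
  have fin_u: "finite (factors u n)"
    by (rule finite_factors[of u "{a, b}"]) (use u_binary in auto)
  have fin_bb: "finite (factors bb k)" for k
    by (rule finite_factors[of bb "{2, 3}"]) (use bb_binary in auto)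
  have "factors v n \<subseteq> (\<Union>xs\<in>factors u n. colour_list a xs ` factors bb (count_list xs b))"
  proof
    fix ys assume "ys \<in> factors v n"
    then obtain i where "ys = factor_at v i n"
      by (auto simp: mem_factors_iff)
    then have "ys \<in> colour_list a (factor_at u i n) ` factors bb (count_list (factor_at u i n) b)"
      using factor_at_v[of i n] by (simp add: occ_def)
    then show "ys \<in> (\<Union>xs\<in>factors u n. colour_list a xs ` factors bb (count_list xs b))"
      by (rule UN_I[OF factor_at_in_factors])
  qed
  then have "card (factors v n) \<le> card (\<Union>xs\<in>factors u n. colour_list a xs ` factors bb (count_list xs b))"
    by (rule card_mono[rotated]) (simp add: fin_u fin_bb)
  also have "\<dots> \<le> (\<Sum>xs\<in>factors u n. card (colour_list a xs ` factors bb (count_list xs b)))"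
    by (rule card_UN_le[OF fin_u])
  also have "\<dots> \<le> (\<Sum>xs\<in>factors u n. count_list xs b + 1)"
  proof (rule sum_mono)
    fix xs
    have "card (colour_list a xs ` factors bb (count_list xs b)) \<le> card (factors bb (count_list xs b))"
      by (rule card_image_le[OF fin_bb])
    also have "\<dots> \<le> count_list xs b + 1"
      using balanced_binary_card_factors[where w = bb, OF bb_binary _ bb_balanced] by simp
    finally show "card (colour_list a xs ` factors bb (count_list xs b)) \<le> count_list xs b + 1" .
  qed
  finally show ?thesis .
qed

lemma P_alpha_eq_card:
  assumes K: "int K = \<lceil>real n * \<alpha>\<rceil>"
  shows "P_alpha u a b \<alpha> n = card {xs \<in> factors u n. count_list xs b = K}"
proof -
  have "int (count_list xs a) = \<lfloor>(1 - \<alpha>) * real n\<rfloor> \<and> int (count_list xs b) = \<lceil>real n * \<alpha>\<rceil>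
        \<longleftrightarrow> count_list xs b = K" if xs_in: "xs \<in> factors u n" for xs
  proof -
    obtain i where xs: "xs = factor_at u i n"
      using xs_in by (auto simp: mem_factors_iff)
    have "count_list xs a = n - count_list xs b" "count_list xs b \<le> n"
      using binary_occ_complement[where w = u, OF u_binary a_neq_b, of i n] occ_le[of u b i n]
      by (simp_all add: xs occ_def)
    then show ?thesis
      unfolding floor_one_minus_mult K[symmetric] by linarith
  qed
  then show ?thesis
    unfolding P_alpha_def by (metis (no_types, lifting) Collect_cong)
qed

text \<open>Each factor of \<open>u\<close> contains \<open>K = \<lceil>n \<alpha>\<rceil>\<close> or \<open>K - 1\<close> letters \<open>b\<close>, and the factors with \<open>K\<close> of them
  are exactly those counted by \<open>P_alpha\<close>.\<close>

lemma colour_factor_complexity: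
  assumes freq: "(\<lambda>n. real (b_before n) / real n) \<longlonglongrightarrow> \<alpha>"
    and irr: "\<alpha> \<notin> \<rat>" and pos: "0 < \<alpha>" and n: "n \<ge> 1"
  shows "int (factor_complexity v n) \<le> int (P_alpha u a b \<alpha> n) + (int n + 1) * \<lceil>real n * \<alpha>\<rceil>"
proof -
  define K where "K = nat \<lceil>real n * \<alpha>\<rceil>"
  have "0 < real n * \<alpha>"
    using n pos by simp
  then have K: "int K = \<lceil>real n * \<alpha>\<rceil>"
    unfolding K_def by (simp add: zero_le_ceiling)
  have fin_u: "finite (factors u n)"
    by (rule finite_factors[of u "{a, b}"]) (use u_binary in auto)
  define S where "S = {xs \<in> factors u n. count_list xs b = K}"
  have count_b: "count_list xs b = K \<or> count_list xs b + 1 = K" if xs: "xs \<in> factors u n" for xs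
  proof -
    obtain i where "xs = factor_at u i n"
      using xs by (auto simp: mem_factors_iff)
    then have "int (count_list xs b) = int K \<or> int (count_list xs b) = int K - 1"
      using balanced_occ_ceiling[OF u_balanced freq[unfolded b_before_def] irr, of n i] n K by (simp add: occ_def)
    then show ?thesis by linarith
  qed
  have "card (factors v n) \<le> (\<Sum>xs\<in>factors u n. count_list xs b + 1)"
    by (rule card_factors_v_le)
  also have "\<dots> = (\<Sum>xs\<in>factors u n. K + (if count_list xs b = K then 1 else 0))"
    by (rule sum.cong) (use count_b in auto)
  also have "\<dots> = card (factors u n) * K + card S"
  proof -
    have "(\<Sum>xs\<in>factors u n. if count_list xs b = K then 1 else 0) = card S"
      unfolding S_def card_eq_sum using sum.inter_filter[OF fin_u, of "\<lambda>_. 1::nat"] by simp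
    then show ?thesis
      by (simp add: sum.distrib)
  qed
  also have "\<dots> \<le> (n + 1) * K + card S"
    using mult_right_mono[OF balanced_binary_card_factors[where w = u, OF u_binary a_neq_b u_balanced, of n], of K]
    by simp
  finally have "card (factors v n) \<le> (n + 1) * K + card S" .
  moreover have "card S = P_alpha u a b \<alpha> n"
    unfolding S_def by (rule P_alpha_eq_card[OF K, symmetric])
  ultimately have "card (factors v n) \<le> (n + 1) * K + P_alpha u a b \<alpha> n"
    by simp
  then have "int (card (factors v n)) \<le> int ((n + 1) * K + P_alpha u a b \<alpha> n)"
    by (rule of_nat_mono)
  then show ?thesis
    unfolding factor_complexity_def K[symmetric] by (simp add: algebra_simps)
qed

end

section \<open>Discrepancies and simultaneous approximation\<close>

lemma near_mod_1_in_unit_interval: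
  fixes G y z c \<epsilon> :: real
  assumes "c \<le> G" "G \<le> c + 1" "G - y \<in> \<int>" "\<bar>y - z\<bar> < \<epsilon>" "c + \<epsilon> \<le> z" "z \<le> c + 1 - \<epsilon>"
  shows "\<bar>G - z\<bar> < \<epsilon>"
proof -
  obtain k where k: "G - y = of_int k" using assms(3) by (auto elim: Ints_cases)
  have "c < y" "y < c + 1" using assms(4-6) by (auto simp: abs_less_iff)
  then have "k = 0" using k assms(1,2) by linarith
  with k assms(4) show ?thesis by simp
qed

lemma oscillation_le_1_interval:
  fixes G :: "nat \<Rightarrow> real"
  assumes "\<And>i j. \<bar>G i - G j\<bar> \<le> 1"
  obtains c where "\<And>i. c \<le> G i" "\<And>i. G i \<le> c + 1"
proof
  have "G 0 - 1 \<le> G j" for j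
    using assms[of 0 j] by (simp add: abs_le_iff)
  then have bdd: "bdd_below (range G)"
    by (intro bdd_belowI[of _ "G 0 - 1"]) auto
  show "Inf (range G) \<le> G i" for i
    by (rule cInf_lower[OF _ bdd]) auto
  show "G i \<le> Inf (range G) + 1" for i
  proof -
    have "G i - 1 \<le> G j" for j
      using assms[of i j] by (simp add: abs_le_iff)
    then have "G i - 1 \<le> Inf (range G)"
      by (intro cInf_greatest) auto
    then show ?thesis by simp
  qed
qed

lemma irrational_progression_approx:
  fixes f z \<epsilon> :: real and p m :: nat
  assumes "f \<notin> \<rat>" "m > 0" "\<epsilon> > 0"
  obtains k h where "\<bar>- (f * real (p + m * k)) - of_int h - z\<bar> < \<epsilon>"
proof -
  have "- (real m * f) \<notin> \<rat>"
  proof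
    assume "- (real m * f) \<in> \<rat>"
    then have "- (- (real m * f)) / real m \<in> \<rat>"
      by (intro Rats_divide) (simp_all add: Rats_minus_iff)
    with assms(1,2) show False by simp
  qed
  then obtain h k where k: "k > 0" "\<bar>of_int k * - (real m * f) - of_int h - (z + f * real p)\<bar> < \<epsilon>"
    by (rule sequence_of_fractional_parts_is_dense[OF _ assms(3)])
  moreover have "- (f * real (p + m * nat k)) - of_int h - z
      = of_int k * - (real m * f) - of_int h - (z + f * real p)"
    using k(1) by (simp add: algebra_simps)
  ultimately show thesis
    using that[of "nat k" h] by simp
qed

lemma near_target_along_progression:
  fixes G :: "nat \<Rightarrow> real"
  assumes int: "\<And>i. G i + f * real i \<in> \<int>" and irr: "f \<notin> \<rat>"
    and c: "\<And>i. c \<le> G i" "\<And>i. G i \<le> c + 1"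
    and "m > 0" "\<epsilon> > 0" and z: "c + \<epsilon> \<le> z" "z \<le> c + 1 - \<epsilon>"
  obtains k where "\<bar>G (p + m * k) - z\<bar> < \<epsilon>"
proof -
  obtain k h where kh: "\<bar>- (f * real (p + m * k)) - of_int h - z\<bar> < \<epsilon>"
    using irrational_progression_approx[OF irr \<open>m > 0\<close> \<open>\<epsilon> > 0\<close>] by blast
  have "G (p + m * k) - (- (f * real (p + m * k)) - of_int h) \<in> \<int>"
    using Ints_add[OF int[of "p + m * k"] Ints_of_int[of h]] by (simp add: algebra_simps)
  then show thesis
    using near_mod_1_in_unit_interval[OF c _ kh z] that by blast
qed

text \<open>Adding a sequence that is eventually \<open>2\<close>-periodic with steps \<open>\<plusminus>1/2\<close> to a discrepancy \<open>G1\<close> of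
  oscillation at most \<open>1\<close> yields oscillation larger than \<open>1\<close>: by Kronecker, \<open>G1\<close> comes close to both
  ends of its range at indices of either parity.\<close>

lemma oscillation_add_half_period_2:
  fixes G1 Gx :: "nat \<Rightarrow> real" and f1 :: real and K :: nat
  assumes int1: "\<And>i. G1 i + f1 * real i \<in> \<int>" and irr: "f1 \<notin> \<rat>"
    and osc1: "\<And>i j. \<bar>G1 i - G1 j\<bar> \<le> 1"
    and per: "\<And>i. i \<ge> K \<Longrightarrow> Gx (i + 2) = Gx i"
    and half: "\<bar>Gx (K + 1) - Gx K\<bar> = 1/2"
  shows "\<exists>i j. \<bar>(G1 i + Gx i) - (G1 j + Gx j)\<bar> > 1"
proof -
  obtain c where c: "\<And>i. c \<le> G1 i" "\<And>i. G1 i \<le> c + 1"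
    using oscillation_le_1_interval[where G = G1, OF osc1] by blast
  have per_iter: "Gx (i + 2 * k) = Gx i" if "i \<ge> K" for i k
  proof (induction k)
    case (Suc k)
    have "Gx (i + 2 * Suc k) = Gx (i + 2 * k + 2)" by (simp add: algebra_simps)
    also have "\<dots> = Gx (i + 2 * k)" using per that by simp
    finally show ?case using Suc by simp
  qed simp
  have close: "\<exists>i. Gx i = Gx i0 \<and> \<bar>G1 i - z\<bar> < 1/10"
    if i0: "i0 \<ge> K" and z: "c + 1/10 \<le> z" "z \<le> c + 1 - 1/10" for i0 z
  proof -
    obtain k where "\<bar>G1 (i0 + 2 * k) - z\<bar> < 1/10"
      using near_target_along_progression[OF int1 irr c _ _ z, where m = 2 and p = i0] by auto
    then show ?thesis using per_iter[OF i0] by blast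
  qed
  obtain i0 where i0: "Gx i0 = Gx K" "\<bar>G1 i0 - (c + 1/10)\<bar> < 1/10"
    using close[of K "c + 1/10"] by auto
  obtain i1 where i1: "Gx i1 = Gx K" "\<bar>G1 i1 - (c + 9/10)\<bar> < 1/10"
    using close[of K "c + 9/10"] by auto
  obtain j0 where j0: "Gx j0 = Gx (K + 1)" "\<bar>G1 j0 - (c + 1/10)\<bar> < 1/10"
    using close[of "K + 1" "c + 1/10"] by auto
  obtain j1 where j1: "Gx j1 = Gx (K + 1)" "\<bar>G1 j1 - (c + 9/10)\<bar> < 1/10"
    using close[of "K + 1" "c + 9/10"] by auto
  consider "Gx (K + 1) = Gx K + 1/2" | "Gx (K + 1) = Gx K - 1/2"
    using half by (auto simp: abs_if split: if_splits)
  then show ?thesis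
  proof cases
    case 1
    then have "(G1 j1 + Gx j1) - (G1 i0 + Gx i0) > 1"
      using i0 j1 unfolding abs_less_iff by linarith
    then show ?thesis by (intro exI[of _ j1] exI[of _ i0]) simp
  next
    case 2
    then have "(G1 i1 + Gx i1) - (G1 j0 + Gx j0) > 1"
      using i1 j0 unfolding abs_less_iff by linarith
    then show ?thesis by (intro exI[of _ i1] exI[of _ j0]) simp
  qed
qed

text \<open>The sign convention matches discrepancies \<open>G i\<close>, which are congruent to \<open>- f i\<close> modulo \<open>1\<close>.\<close>

definition orbit_near :: "real \<Rightarrow> real \<Rightarrow> real \<Rightarrow> real \<Rightarrow> real \<Rightarrow> bool" where
  "orbit_near f1 f3 z1 z3 \<epsilon> \<longleftrightarrow>
     (\<exists>i::nat. \<exists>h1 h3::int. \<bar>- (f1 * real i) - of_int h1 - z1\<bar> < \<epsilon> \<and> \<bar>- (f3 * real i) - of_int h3 - z3\<bar> < \<epsilon>)"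

lemma bezout_decomposition:
  fixes x y :: real and p q s t :: int
  assumes "s * p + t * q = 1"
  shows "x = of_int q * (of_int t * x - of_int s * y) + of_int s * (of_int p * x + of_int q * y)"
    and "y = - of_int p * (of_int t * x - of_int s * y) + of_int t * (of_int p * x + of_int q * y)"
proof -
  have one: "of_int s * of_int p + of_int t * of_int q = (1::real)"
    using arg_cong[OF assms, of real_of_int] by simp
  have "of_int q * (of_int t * x - of_int s * y) + of_int s * (of_int p * x + of_int q * y)
      = x * (of_int s * of_int p + of_int t * of_int q)"
    by (simp add: algebra_simps)
  then show "x = of_int q * (of_int t * x - of_int s * y) + of_int s * (of_int p * x + of_int q * y)"
    by (simp only: one mult_1_right)
  have "- of_int p * (of_int t * x - of_int s * y) + of_int t * (of_int p * x + of_int q * y)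
      = y * (of_int s * of_int p + of_int t * of_int q)"
    by (simp add: algebra_simps)
  then show "y = - of_int p * (of_int t * x - of_int s * y) + of_int t * (of_int p * x + of_int q * y)"
    by (simp only: one mult_1_right)
qed

lemma nat_solution_dvd_linear:
  fixes g R N :: int
  assumes "gcd g R = 1" "g > 0"
  obtains j :: nat where "g dvd R * int j + N"
proof -
  obtain a c where ac: "a * R + c * g = 1"
    using bezout_int[of R g] assms(1) by (auto simp: gcd.commute)
  define j where "j = nat ((- a * N) mod g)"
  have "int j = (- a * N) mod g"
    using assms(2) by (simp add: j_def)
  then have "(R * int j + N) mod g = (R * (- a * N) + N) mod g"
    by (metis mod_add_left_eq mod_mult_right_eq)
  also have "R * (- a * N) + N = N * (1 - a * R)"
    by (simp add: algebra_simps)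
  also have "1 - a * R = c * g"
    using ac by linarith
  finally have "g dvd R * int j + N"
    by (simp add: dvd_eq_mod_eq_0)
  then show thesis by (rule that)
qed

text \<open>If \<open>f1, f3\<close> and the target \<open>z1, z3\<close> are written in the coordinates \<open>(\<eta>, r)\<close> and \<open>(\<sigma>, \<tau>)\<close> of a
  unimodular basis, an integer value of \<open>r i + \<tau>\<close> and a good approximation in the \<open>\<eta>\<close>-coordinate suffice.\<close>

lemma orbit_near_from_coordinates:
  fixes p q s t h M :: int and i :: nat
  assumes f1: "f1 = of_int q * \<eta> + of_int s * r" and f3: "f3 = - of_int p * \<eta> + of_int t * r"
    and z1: "z1 = of_int q * \<sigma> + of_int s * \<tau>" and z3: "z3 = - of_int p * \<sigma> + of_int t * \<tau>"
    and M: "r * real i + \<tau> = of_int M"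
    and e: "\<bar>- (\<eta> * real i) - of_int h - \<sigma>\<bar> < \<epsilon> / (\<bar>of_int p\<bar> + \<bar>of_int q\<bar> + 1)"
  shows "orbit_near f1 f3 z1 z3 \<epsilon>"
proof -
  define e where "e = - (\<eta> * real i) - of_int h - \<sigma>"
  have "- (f1 * real i) - of_int (q * h - s * M) - z1 = of_int q * e"
    unfolding f1 z1 e_def of_int_diff of_int_mult M[symmetric] by (simp add: algebra_simps)
  moreover have "- (f3 * real i) - of_int (- p * h - t * M) - z3 = - of_int p * e"
    unfolding f3 z3 e_def of_int_diff of_int_mult of_int_minus M[symmetric] by (simp add: algebra_simps)
  moreover have "\<bar>of_int k * e\<bar> < \<epsilon>" if "k = p \<or> k = q" for k :: int
  proof -
    have "\<bar>of_int k * e\<bar> \<le> (\<bar>of_int p\<bar> + \<bar>of_int q\<bar>) * \<bar>e\<bar>"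
      using that by (auto simp: abs_mult intro: mult_right_mono)
    also have "\<dots> < \<epsilon>"
      using e unfolding e_def[symmetric] by (simp add: field_simps)
    finally show ?thesis .
  qed
  ultimately show ?thesis
    unfolding orbit_near_def
    by (intro exI[of _ i] exI[of _ "q * h - s * M"] exI[of _ "- p * h - t * M"]) (simp add: abs_minus_commute)
qed

lemma progression_value_Ints:
  fixes g R N :: int and r \<tau> :: real and j k :: nat
  assumes "g > 0" "of_int g * r = of_int R" "of_int g * \<tau> = of_int N" "g dvd R * int j + N"
  shows "r * real (j + nat g * k) + \<tau> \<in> \<int>"
proof -
  obtain M where M: "R * int j + N = g * M"
    using assms(4) by (auto elim: dvdE)
  have "of_int g * (r * real (j + nat g * k) + \<tau>) = (of_int g * r) * real (j + nat g * k) + of_int g * \<tau>"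
    by (simp add: algebra_simps)
  also have "\<dots> = of_int R * real (j + nat g * k) + of_int N"
    using assms(2,3) by simp
  also have "\<dots> = of_int g * of_int (M + R * int k)"
    using arg_cong[OF M, of real_of_int] assms(1) by (simp add: algebra_simps)
  finally show ?thesis
    using assms(1) by simp
qed

lemma orbit_near_dependent:
  fixes f1 f3 z1 z3 \<epsilon> :: real and P Q R :: int
  assumes irr: "f1 \<notin> \<rat>" and rel: "of_int P * f1 + of_int Q * f3 = of_int R"
    and prim: "gcd (gcd P Q) R = 1" and nz: "P \<noteq> 0 \<or> Q \<noteq> 0"
    and zin: "of_int P * z1 + of_int Q * z3 \<in> \<int>" and eps: "\<epsilon> > 0"
  shows "orbit_near f1 f3 z1 z3 \<epsilon>"
proof -
  define g where "g = gcd P Q"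
  have gpos: "g > 0"
    using nz unfolding g_def by auto
  obtain p q where pq: "P = g * p" "Q = g * q"
    unfolding g_def by (meson gcd_dvd1 gcd_dvd2 dvdE)
  have "gcd (g * p) (g * q) = g"
    by (simp only: pq[symmetric]) (simp add: g_def)
  then have "g * gcd p q = g * 1"
    using gcd_mult_distrib_int[of g p q] gpos by simp
  then obtain s t where st: "s * p + t * q = 1"
    using bezout_int[of p q] gpos by auto
  obtain N where N: "of_int P * z1 + of_int Q * z3 = of_int N"
    using zin by (auto elim: Ints_cases)
  have "gcd g R = 1" using prim by (simp add: g_def)
  then obtain j where j: "g dvd R * int j + N"
    using nat_solution_dvd_linear gpos by metis
  define \<eta> where "\<eta> = of_int t * f1 - of_int s * f3"
  define r where "r = of_int p * f1 + of_int q * f3"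
  define \<sigma> where "\<sigma> = of_int t * z1 - of_int s * z3"
  define \<tau> where "\<tau> = of_int p * z1 + of_int q * z3"
  have gr: "of_int g * r = of_int R" and g\<tau>: "of_int g * \<tau> = of_int N"
    using rel N unfolding r_def \<tau>_def pq by (simp_all add: algebra_simps)
  have "\<eta> \<notin> \<rat>"
  proof
    assume "\<eta> \<in> \<rat>"
    moreover have "r \<in> \<rat>"
      using gr gpos by (metis Rats_divide Rats_of_int nonzero_mult_div_cancel_left of_int_0_less_iff
          order_less_irrefl)
    ultimately have "of_int q * \<eta> + of_int s * r \<in> \<rat>" by simp
    then show False
      using irr bezout_decomposition(1)[OF st, of f1 f3] unfolding \<eta>_def r_def by simp
  qed
  define \<delta> where "\<delta> = \<epsilon> / (\<bar>of_int p\<bar> + \<bar>of_int q\<bar> + 1)"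
  have "\<delta> > 0"
    unfolding \<delta>_def using eps by (simp add: add_pos_nonneg)
  then obtain k h where kh: "\<bar>- (\<eta> * real (j + nat g * k)) - of_int h - \<sigma>\<bar> < \<delta>"
    using irrational_progression_approx[OF \<open>\<eta> \<notin> \<rat>\<close>, of "nat g" \<delta> j \<sigma>] gpos by auto
  have "r * real (j + nat g * k) + \<tau> \<in> \<int>"
    by (rule progression_value_Ints[OF gpos gr g\<tau> j])
  then obtain M where rM: "r * real (j + nat g * k) + \<tau> = of_int M"
    by (auto elim: Ints_cases)
  have coords: "f1 = of_int q * \<eta> + of_int s * r" "f3 = - of_int p * \<eta> + of_int t * r"
    "z1 = of_int q * \<sigma> + of_int s * \<tau>" "z3 = - of_int p * \<sigma> + of_int t * \<tau>"
    unfolding \<eta>_def r_def \<sigma>_def \<tau>_def by (rule bezout_decomposition[OF st])+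
  show ?thesis
    by (rule orbit_near_from_coordinates[OF coords rM]) (use kh in \<open>simp add: \<delta>_def\<close>)
qed

text \<open>Kronecker's theorem only provides an integer multiplier \<open>k\<close>; adding \<open>q \<bar>k\<bar>\<close> for a Dirichlet
  denominator \<open>q\<close> makes it positive at the cost of an error \<open>\<bar>k\<bar>/N\<close>.\<close>

lemma orbit_near_of_int_multiplier:
  fixes f1 f3 z1 z3 \<epsilon> :: real and k m1 m3 :: int
  assumes "\<bar>of_int k * f1 - of_int m1 + z1\<bar> < \<epsilon>/2" "\<bar>of_int k * f3 - of_int m3 + z3\<bar> < \<epsilon>/2"
    and "\<epsilon> > 0"
  shows "orbit_near f1 f3 z1 z3 \<epsilon>"
proof -
  define N :: nat where "N = nat \<lceil>2 * \<bar>of_int k\<bar> / \<epsilon>\<rceil> + 1"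
  have "N > 0" unfolding N_def by simp
  then obtain q p where q: "0 < q" and p: "\<And>j. j < 2 \<Longrightarrow> \<bar>of_int q * [f1, f3] ! j - of_int (p j)\<bar> < 1/N"
    using Dirichlet_approx_simult[of N 2 "\<lambda>j. [f1, f3] ! j"] by metis
  have kN: "\<bar>real_of_int k\<bar> / N < \<epsilon>/2"
  proof -
    have "2 * \<bar>of_int k\<bar> / \<epsilon> < real N" unfolding N_def by linarith
    then show ?thesis using \<open>N > 0\<close> \<open>\<epsilon> > 0\<close> by (simp add: field_simps)
  qed
  have "\<bar>k\<bar> \<le> q * \<bar>k\<bar>" using q by (simp add: mult_le_cancel_right1)
  then have "k + q * \<bar>k\<bar> \<ge> 0" by linarith
  define i where "i = nat (k + q * \<bar>k\<bar>)"
  have ri: "real i = of_int k + of_int q * \<bar>of_int k\<bar>"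
    unfolding i_def using \<open>k + q * \<bar>k\<bar> \<ge> 0\<close> by simp
  have shift: "\<bar>- (f * real i) - of_int (- m - \<bar>k\<bar> * pp) - z\<bar> < \<epsilon>"
    if "\<bar>of_int k * f - of_int m + z\<bar> < \<epsilon>/2" "\<bar>of_int q * f - of_int pp\<bar> < 1/N" for f m pp z
  proof -
    have "- (f * real i) - of_int (- m - \<bar>k\<bar> * pp) - z
        = - ((of_int k * f - of_int m + z) + \<bar>of_int k\<bar> * (of_int q * f - of_int pp))"
      unfolding ri by (simp add: algebra_simps)
    moreover have "\<bar>\<bar>of_int k\<bar> * (of_int q * f - of_int pp)\<bar> \<le> \<bar>of_int k\<bar> / N"
      using that(2) by (simp add: abs_mult divide_inverse mult_left_mono less_imp_le)
    ultimately show ?thesis using that(1) kN by linarith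
  qed
  have "\<bar>of_int q * f1 - of_int (p 0)\<bar> < 1/N" "\<bar>of_int q * f3 - of_int (p 1)\<bar> < 1/N"
    using p[of 0] p[of 1] by simp_all
  then show ?thesis
    unfolding orbit_near_def using shift[OF assms(1)] shift[OF assms(2)] by blast
qed

lemma not_int_dependent_triple:
  fixes f1 f3 :: real
  assumes no_rel: "\<And>P Q R::int. of_int P * f1 + of_int Q * f3 = of_int R \<Longrightarrow> P = 0 \<and> Q = 0"
  shows "\<not> module.dependent (\<lambda>r x. of_int r * x) {f1, f3, 1}"
proof
  interpret M: Modules.module "(\<lambda>r. (*) (real_of_int r))"
    by (simp add: Modules.module.intro distrib_left mult.commute)
  have n13: "f1 \<noteq> f3" and n1: "f1 \<noteq> 1" and n3: "f3 \<noteq> 1"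
    using no_rel[of 1 "-1" 0] no_rel[of 1 0 1] no_rel[of 0 1 1] by auto
  assume "M.dependent {f1, f3, 1}"
  then obtain T U where TU: "finite T" "T \<subseteq> {f1, f3, 1}" "(\<Sum>v\<in>T. real_of_int (U v) * v) = 0"
    "\<exists>v\<in>T. U v \<noteq> 0"
    unfolding M.dependent_explicit by blast
  define U' where "U' v = (if v \<in> T then U v else 0)" for v
  have "(\<Sum>v\<in>{f1, f3, 1}. real_of_int (U' v) * v) = (\<Sum>v\<in>T. real_of_int (U' v) * v)"
    by (rule sum.mono_neutral_right) (use TU in \<open>auto simp: U'_def\<close>)
  also have "\<dots> = 0"
    using TU(3) by (simp add: U'_def)
  finally have sum0: "real_of_int (U' f1) * f1 + real_of_int (U' f3) * f3 + real_of_int (U' 1) = 0"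
    using n13 n1 n3 by (simp add: add.assoc)
  then have "real_of_int (U' f1) * f1 + real_of_int (U' f3) * f3 = real_of_int (- U' 1)"
    by simp
  then have "U' f1 = 0" "U' f3 = 0"
    using no_rel by blast+
  moreover from this have "U' 1 = 0"
    using sum0 by simp
  ultimately show False
    using TU(2,4) by (auto simp: U'_def)
qed

lemma orbit_near_independent:
  fixes f1 f3 z1 z3 \<epsilon> :: real
  assumes no_rel: "\<And>P Q R::int. of_int P * f1 + of_int Q * f3 = of_int R \<Longrightarrow> P = 0 \<and> Q = 0"
    and eps: "\<epsilon> > 0"
  shows "orbit_near f1 f3 z1 z3 \<epsilon>"
proof -
  define \<theta> :: "nat \<Rightarrow> real" where "\<theta> = (\<lambda>j. [f1, f3, 1] ! j)"
  have atMost2: "{..2::nat} = {0, 1, 2}" by auto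
  have n13: "f1 \<noteq> f3" and n1: "f1 \<noteq> 1" and n3: "f3 \<noteq> 1"
    using no_rel[of 1 "-1" 0] no_rel[of 1 0 1] no_rel[of 0 1 1] by auto
  have "\<theta> ` {..2} = {f1, f3, 1}" "inj_on \<theta> {..2}"
    using n13 n1 n3 by (auto simp: atMost2 \<theta>_def)
  then obtain k m where km: "\<And>j. j < 2 \<Longrightarrow> \<bar>of_int k * \<theta> j - of_int (m j) - [- z1, - z3] ! j\<bar> < \<epsilon>/2"
    using Kronecker_thm_2[of \<theta> 2 "\<epsilon>/2" "\<lambda>j. [- z1, - z3] ! j"] not_int_dependent_triple[OF no_rel] eps
    by (auto simp: \<theta>_def)
  show ?thesis
    by (rule orbit_near_of_int_multiplier[OF _ _ eps])
       (use km[of 0] km[of 1] in \<open>simp_all add: \<theta>_def\<close>)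
qed

lemma between_zero_scaled:
  fixes \<tau> p :: real
  assumes "0 \<le> \<tau> \<and> \<tau> \<le> p \<or> p \<le> \<tau> \<and> \<tau> \<le> 0"
  obtains x where "0 \<le> x" "x \<le> 1" "\<tau> = p * x"
proof (cases "p = 0")
  case True
  then show thesis using assms that[of 0] by auto
next
  case False
  then show thesis using assms that[of "\<tau> / p"] by (auto simp: field_simps)
qed

text \<open>Along the two legs of the triangle \<open>s, t \<ge> 1/40\<close>, \<open>s + t \<le> 5/12\<close> issuing from \<open>(1/40, 1/40)\<close>, the form
  \<open>P s + Q t\<close> sweeps an interval of length \<open>11/30 * width \<ge> 11/10 > 1\<close>, so it meets every residue class.\<close>

lemma linear_form_residue_in_triangle:
  fixes P Q :: int and \<mu> :: real
  assumes width: "max 0 (max P Q) - min 0 (min P Q) \<ge> 3"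
  obtains s t where "1/40 \<le> s" "1/40 \<le> t" "s + t \<le> 5/12" "of_int P * s + of_int Q * t - \<mu> \<in> \<int>"
proof -
  define m :: real where "m = of_int (min 0 (min P Q))"
  define M :: real where "M = of_int (max 0 (max P Q))"
  define v :: real where "v = (of_int P + of_int Q) / 40"
  define y :: real where "y = \<mu> + of_int \<lceil>v + 11/30 * m - \<mu>\<rceil>"
  define \<tau> :: real where "\<tau> = 30 / 11 * (y - v)"
  have y: "y - \<mu> \<in> \<int>"
    unfolding y_def by simp
  have "y = v + 11/30 * \<tau>"
    unfolding \<tau>_def by (simp add: field_simps)
  have "M - m \<ge> 3"
    using width unfolding m_def M_def by linarith
  moreover have "v + 11/30 * m \<le> y" "y < v + 11/30 * m + 1"
    unfolding y_def by linarith+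
  ultimately have "m \<le> \<tau>" "\<tau> \<le> M"
    unfolding \<tau>_def by (simp_all add: field_simps)
  then consider "0 \<le> \<tau> \<and> \<tau> \<le> of_int P \<or> of_int P \<le> \<tau> \<and> \<tau> \<le> 0"
    | "0 \<le> \<tau> \<and> \<tau> \<le> of_int Q \<or> of_int Q \<le> \<tau> \<and> \<tau> \<le> 0"
    unfolding m_def M_def by linarith
  then show thesis
  proof cases
    case 1
    then obtain x where x: "0 \<le> x" "x \<le> 1" "\<tau> = of_int P * x"
      using between_zero_scaled by blast
    then have "of_int P * (1/40 + 11/30 * x) + of_int Q * (1/40) = y"
      using \<open>y = v + 11/30 * \<tau>\<close> by (simp add: v_def algebra_simps)
    then show thesis
      using that[of "1/40 + 11/30 * x" "1/40"] x y by simp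
  next
    case 2
    then obtain x where x: "0 \<le> x" "x \<le> 1" "\<tau> = of_int Q * x"
      using between_zero_scaled by blast
    then have "of_int P * (1/40) + of_int Q * (1/40 + 11/30 * x) = y"
      using \<open>y = v + 11/30 * \<tau>\<close> by (simp add: v_def algebra_simps)
    then show thesis
      using that[of "1/40" "1/40 + 11/30 * x"] x y by simp
  qed
qed

lemma small_int_relation_cases:
  fixes P Q R :: int and f1 f3 :: real
  assumes rel: "of_int P * f1 + of_int Q * f3 = of_int R"
    and width: "max 0 (max P Q) - min 0 (min P Q) \<le> 2" and "Q \<noteq> 0"
    and pos: "0 < f1" "0 < f3" "f1 + f3 < 1"
  shows "f1 = f3 \<or> 2 * f1 + f3 = 1 \<or> f1 + 2 * f3 = 1 \<or> f3 = 1/2 \<or> f1 + f3 = 1/2"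
proof -
  have P: "P \<in> {-2, -1, 0, 1, 2}" and Q: "Q \<in> {-2, -1, 1, 2}"
    using width \<open>Q \<noteq> 0\<close> by auto
  have "\<bar>of_int P * f1\<bar> \<le> 2 * f1" "\<bar>of_int Q * f3\<bar> \<le> 2 * f3"
    using P Q pos by (auto simp: abs_mult)
  then have "\<bar>real_of_int R\<bar> < 2"
    using rel pos unfolding abs_le_iff abs_less_iff by linarith
  then have "R \<in> {-1, 0, 1}"
    by auto
  then show ?thesis
    using P Q rel width pos by (auto, linarith?)
qed

lemma primitive_int_relation:
  fixes P Q R :: int and f1 f3 :: real
  assumes rel: "of_int P * f1 + of_int Q * f3 = of_int R" and nz: "P \<noteq> 0 \<or> Q \<noteq> 0"
  obtains P0 Q0 R0 :: int where "of_int P0 * f1 + of_int Q0 * f3 = of_int R0"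
    "P0 \<noteq> 0 \<or> Q0 \<noteq> 0" "gcd (gcd P0 Q0) R0 = 1"
proof -
  define d where "d = gcd (gcd P Q) R"
  have "d > 0"
    using nz unfolding d_def by auto
  obtain P0 Q0 R0 where PQR: "P = d * P0" "Q = d * Q0" "R = d * R0"
    unfolding d_def by (meson dvd_trans gcd_dvd1 gcd_dvd2 dvdE)
  have "d = gcd (gcd (d * P0) (d * Q0)) (d * R0)"
    by (simp only: PQR[symmetric]) (simp add: d_def)
  also have "\<dots> = d * gcd (gcd P0 Q0) R0"
    using \<open>d > 0\<close> by (simp add: gcd_mult_distrib_int[symmetric])
  finally have prim: "gcd (gcd P0 Q0) R0 = 1"
    using \<open>d > 0\<close> by simp
  have "of_int d * (of_int P0 * f1 + of_int Q0 * f3) = of_int d * (of_int R0 :: real)"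
    using rel unfolding PQR by (simp add: algebra_simps)
  then have rel0: "of_int P0 * f1 + of_int Q0 * f3 = of_int R0"
    using \<open>d > 0\<close> by simp
  have "P0 \<noteq> 0 \<or> Q0 \<noteq> 0"
    using nz PQR by auto
  then show thesis
    by (rule that[OF rel0 _ prim])
qed

lemma discrepancy_pair_near_target:
  fixes G1 G3 :: "nat \<Rightarrow> real"
  assumes int1: "\<And>i. G1 i + f1 * real i \<in> \<int>" and int3: "\<And>i. G3 i + f3 * real i \<in> \<int>"
    and c1: "\<And>i. c1 \<le> G1 i" "\<And>i. G1 i \<le> c1 + 1" and c3: "\<And>i. c3 \<le> G3 i" "\<And>i. G3 i \<le> c3 + 1"
    and near: "orbit_near f1 f3 z1 z3 \<epsilon>"
    and z1: "c1 + \<epsilon> \<le> z1" "z1 \<le> c1 + 1 - \<epsilon>" and z3: "c3 + \<epsilon> \<le> z3" "z3 \<le> c3 + 1 - \<epsilon>"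
  obtains i where "\<bar>G1 i - z1\<bar> < \<epsilon>" "\<bar>G3 i - z3\<bar> < \<epsilon>"
proof -
  obtain i h1 h3 where ih: "\<bar>- (f1 * real i) - of_int h1 - z1\<bar> < \<epsilon>" "\<bar>- (f3 * real i) - of_int h3 - z3\<bar> < \<epsilon>"
    using near unfolding orbit_near_def by blast
  have "G1 i - (- (f1 * real i) - of_int h1) \<in> \<int>" "G3 i - (- (f3 * real i) - of_int h3) \<in> \<int>"
    using Ints_add[OF int1[of i] Ints_of_int[of h1]] Ints_add[OF int3[of i] Ints_of_int[of h3]]
    by (simp_all add: algebra_simps)
  then show thesis
    using near_mod_1_in_unit_interval[OF c1 _ ih(1) z1] near_mod_1_in_unit_interval[OF c3 _ ih(2) z3] that
    by blast
qed

lemma discrepancy_pair_far_targets: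
  fixes G1 G3 :: "nat \<Rightarrow> real"
  assumes int1: "\<And>i. G1 i + f1 * real i \<in> \<int>" and int3: "\<And>i. G3 i + f3 * real i \<in> \<int>"
    and c1: "\<And>i. c1 \<le> G1 i" "\<And>i. G1 i \<le> c1 + 1" and c3: "\<And>i. c3 \<le> G3 i" "\<And>i. G3 i \<le> c3 + 1"
    and osc13: "\<And>i j. \<bar>(G1 i + G3 i) - (G1 j + G3 j)\<bar> \<le> 1"
    and near: "orbit_near f1 f3 z1 z3 \<epsilon>" "orbit_near f1 f3 z1' z3' \<epsilon>"
    and inside: "c1 + \<epsilon> \<le> z1" "z1 \<le> c1 + 1 - \<epsilon>" "c3 + \<epsilon> \<le> z3" "z3 \<le> c3 + 1 - \<epsilon>"
      "c1 + \<epsilon> \<le> z1'" "z1' \<le> c1 + 1 - \<epsilon>" "c3 + \<epsilon> \<le> z3'" "z3' \<le> c3 + 1 - \<epsilon>"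
    and gap: "z1' + z3' - (z1 + z3) > 1 + 4 * \<epsilon>"
  shows False
proof -
  obtain i where "\<bar>G1 i - z1\<bar> < \<epsilon>" "\<bar>G3 i - z3\<bar> < \<epsilon>"
    using discrepancy_pair_near_target[OF int1 int3 c1 c3 near(1) inside(1-4)] by blast
  moreover obtain j where "\<bar>G1 j - z1'\<bar> < \<epsilon>" "\<bar>G3 j - z3'\<bar> < \<epsilon>"
    using discrepancy_pair_near_target[OF int1 int3 c1 c3 near(2) inside(5-8)] by blast
  ultimately show False
    using osc13[of j i] gap by (simp add: abs_less_iff abs_le_iff)
qed

text \<open>Two discrepancies with oscillation at most \<open>1\<close>, whose sum also has oscillation at most \<open>1\<close>,
  can only exist for five special frequency pairs. Otherwise the orbit of \<open>(- f1, - f3)\<close> modulo \<open>1\<close>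
  is dense enough (on the whole torus, or on the lines \<open>P x + Q y \<in> \<int>\<close> of a wide primitive
  relation) to make \<open>(G1, G3)\<close> come close to two points whose coordinate sums differ by more than \<open>1\<close>.\<close>

lemma bounded_discrepancy_pair_relation:
  fixes G1 G3 :: "nat \<Rightarrow> real" and f1 f3 :: real
  assumes int1: "\<And>i. G1 i + f1 * real i \<in> \<int>" and int3: "\<And>i. G3 i + f3 * real i \<in> \<int>"
    and osc1: "\<And>i j. \<bar>G1 i - G1 j\<bar> \<le> 1" and osc3: "\<And>i j. \<bar>G3 i - G3 j\<bar> \<le> 1"
    and osc13: "\<And>i j. \<bar>(G1 i + G3 i) - (G1 j + G3 j)\<bar> \<le> 1"
    and irr: "f1 \<notin> \<rat>" and pos: "0 < f1" "0 < f3" "f1 + f3 < 1"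
  shows "f1 = f3 \<or> 2 * f1 + f3 = 1 \<or> f1 + 2 * f3 = 1 \<or> f3 = 1/2 \<or> f1 + f3 = 1/2"
proof -
  obtain c1 where c1: "\<And>i. c1 \<le> G1 i" "\<And>i. G1 i \<le> c1 + 1"
    using oscillation_le_1_interval[where G = G1, OF osc1] by blast
  obtain c3 where c3: "\<And>i. c3 \<le> G3 i" "\<And>i. G3 i \<le> c3 + 1"
    using oscillation_le_1_interval[where G = G3, OF osc3] by blast
  note far = discrepancy_pair_far_targets[OF int1 int3 c1 c3 osc13]
  show ?thesis
  proof (cases "\<exists>P Q R::int. of_int P * f1 + of_int Q * f3 = of_int R \<and> (P \<noteq> 0 \<or> Q \<noteq> 0)")
    case False
    then have "orbit_near f1 f3 z1 z3 (1/20)" for z1 z3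
      by (intro orbit_near_independent) auto
    then show ?thesis
      using far[of "c1 + 1/10" "c3 + 1/10" "1/20" "c1 + 9/10" "c3 + 9/10"] by simp
  next
    case True
    then obtain P Q R :: int where "of_int P * f1 + of_int Q * f3 = of_int R" "P \<noteq> 0 \<or> Q \<noteq> 0"
      by blast
    then obtain P0 Q0 R0 :: int where rel0: "of_int P0 * f1 + of_int Q0 * f3 = of_int R0"
      and nz0: "P0 \<noteq> 0 \<or> Q0 \<noteq> 0" and prim: "gcd (gcd P0 Q0) R0 = 1"
      by (rule primitive_int_relation)
    show ?thesis
    proof (cases "max 0 (max P0 Q0) - min 0 (min P0 Q0) \<ge> 3")
      case True
      define \<mu> where "\<mu> = of_int P0 * c1 + of_int Q0 * c3"
      obtain s t where st: "1/40 \<le> s" "1/40 \<le> t" "s + t \<le> 5/12" "of_int P0 * s + of_int Q0 * t - (- \<mu>) \<in> \<int>"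
        using linear_form_residue_in_triangle[OF True] by blast
      obtain s' t' where st': "1/40 \<le> s'" "1/40 \<le> t'" "s' + t' \<le> 5/12" "of_int P0 * s' + of_int Q0 * t' - \<mu> \<in> \<int>"
        using linear_form_residue_in_triangle[OF True] by blast
      have "of_int P0 * (c1 + s) + of_int Q0 * (c3 + t) \<in> \<int>"
        using st(4) unfolding \<mu>_def by (simp add: algebra_simps)
      moreover have "of_int P0 * (c1 + 1 - s') + of_int Q0 * (c3 + 1 - t')
          = of_int (P0 + Q0) - (of_int P0 * s' + of_int Q0 * t' - \<mu>)"
        unfolding \<mu>_def by (simp add: algebra_simps)
      then have "of_int P0 * (c1 + 1 - s') + of_int Q0 * (c3 + 1 - t') \<in> \<int>"
        using st'(4) by simp
      ultimately show ?thesis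
        using far[of "c1 + s" "c3 + t" "1/40" "c1 + 1 - s'" "c3 + 1 - t'"] st st'
          orbit_near_dependent[OF irr rel0 prim nz0] by simp
    next
      case False
      have "Q0 \<noteq> 0"
      proof
        assume "Q0 = 0"
        then have "f1 = of_int R0 / of_int P0"
          using nz0 rel0 by (simp add: field_simps)
        then show False using irr by simp
      qed
      with False show ?thesis
        using small_int_relation_cases[OF rel0 _ _ pos] by simp
    qed
  qed
qed

section \<open>The colouring is not 1-balanced\<close>

definition discrepancy :: "(nat \<Rightarrow> 'a) \<Rightarrow> 'a \<Rightarrow> real \<Rightarrow> nat \<Rightarrow> real" where
  "discrepancy w x f i = real (occ w x 0 i) - f * real i"

lemma discrepancy_plus_Ints: "discrepancy w x f i + f * real i \<in> \<int>"
  by (simp add: discrepancy_def)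

lemma discrepancy_add:
  "discrepancy w x f (i + n) = discrepancy w x f i + real (occ w x i n) - f * real n"
  by (simp add: discrepancy_def occ_add algebra_simps)

lemma balanced_discrepancy_oscillation:
  assumes bal: "C_balanced 1 w" and freq: "(\<lambda>n. real (occ w x 0 n) / real n) \<longlonglongrightarrow> f"
  shows "\<bar>discrepancy w x f i - discrepancy w x f j\<bar> \<le> 1"
proof -
  have step: "\<bar>discrepancy w x f (i + n) - discrepancy w x f i\<bar> \<le> 1" for i n
    using balanced_occ_near_freq[OF bal freq, of i n] by (simp add: discrepancy_add algebra_simps)
  show ?thesis
  proof (cases "i \<le> j")
    case True
    then show ?thesis using step[of i "j - i"] by (simp add: abs_minus_commute)
  next
    case False
    then show ?thesis using step[of j "i - j"] by simp
  qed
qed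

lemma balanced_half_freq_discrepancy:
  assumes bal: "C_balanced 1 w" and freq: "(\<lambda>n. real (occ w x 0 n) / real n) \<longlonglongrightarrow> 1/2"
  obtains K where "\<And>i. i \<ge> K \<Longrightarrow> discrepancy w x (1/2) (i + 2) = discrepancy w x (1/2) i"
    "\<bar>discrepancy w x (1/2) (K + 1) - discrepancy w x (1/2) K\<bar> = 1/2"
proof -
  obtain K where K: "\<And>i. i \<ge> K \<Longrightarrow> occ w x i 2 = 1"
    using balanced_half_freq_alternates[OF bal freq] by blast
  show thesis
  proof (rule that)
    fix i assume "i \<ge> K"
    show "discrepancy w x (1/2) (i + 2) = discrepancy w x (1/2) i"
      using discrepancy_add[of w x "1/2" i 2] K[OF \<open>i \<ge> K\<close>] by simp
  next
    have "occ w x K 1 = 0 \<or> occ w x K 1 = 1"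
      using occ_le[of w x K 1] by auto
    then show "\<bar>discrepancy w x (1/2) (K + 1) - discrepancy w x (1/2) K\<bar> = 1/2"
      using discrepancy_add[of w x "1/2" K 1] by auto
  qed
qed

lemma balanced_half_freq_sum_oscillation:
  assumes bal: "C_balanced 1 w"
    and freq_y: "(\<lambda>n. real (occ w y 0 n) / real n) \<longlonglongrightarrow> f" and irr: "f \<notin> \<rat>"
    and freq_x: "(\<lambda>n. real (occ w x 0 n) / real n) \<longlonglongrightarrow> 1/2"
  shows "\<exists>i j. \<bar>(discrepancy w y f i + discrepancy w x (1/2) i)
              - (discrepancy w y f j + discrepancy w x (1/2) j)\<bar> > 1"
proof -
  obtain K where "\<And>i. i \<ge> K \<Longrightarrow> discrepancy w x (1/2) (i + 2) = discrepancy w x (1/2) i"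
    "\<bar>discrepancy w x (1/2) (K + 1) - discrepancy w x (1/2) K\<bar> = 1/2"
    using balanced_half_freq_discrepancy[OF bal freq_x] by blast
  then show ?thesis
    using oscillation_add_half_period_2[OF discrepancy_plus_Ints irr
        balanced_discrepancy_oscillation[OF bal freq_y]]
    by blast
qed

context binary_colouring
begin

lemma v_freq_1:
  assumes freq_u: "(\<lambda>n. real (b_before n) / real n) \<longlonglongrightarrow> \<alpha>"
  shows "(\<lambda>n. real (occ v 1 0 n) / real n) \<longlonglongrightarrow> 1 - \<alpha>"
proof -
  have "real (occ v 1 0 n) / real n = 1 - real (b_before n) / real n" if "n \<ge> 1" for n
    using that binary_occ_complement[where w = u, OF u_binary a_neq_b, of 0 n] occ_le[of u b 0 n]
    by (simp add: occ_v b_before_def of_nat_diff field_simps)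
  then have "\<forall>\<^sub>F n in sequentially. 1 - real (b_before n) / real n = real (occ v 1 0 n) / real n"
    by (intro eventually_sequentiallyI[of 1]) simp
  with tendsto_diff[OF tendsto_const freq_u, of 1] show ?thesis
    by (rule Lim_transform_eventually)
qed

lemma v_freq_3:
  assumes freq_u: "(\<lambda>n. real (b_before n) / real n) \<longlonglongrightarrow> \<alpha>" and "\<alpha> > 0"
    and freq_bb: "(\<lambda>m. real (occ bb 3 0 m) / real m) \<longlonglongrightarrow> \<gamma>"
  shows "(\<lambda>n. real (occ v 3 0 n) / real n) \<longlonglongrightarrow> \<gamma> * \<alpha>"
proof -
  have "filterlim (\<lambda>n. real (b_before n) / real n * real n) at_top sequentially"
    by (rule filterlim_tendsto_pos_mult_at_top[OF freq_u \<open>\<alpha> > 0\<close> filterlim_real_sequentially])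
  moreover have "\<forall>\<^sub>F n in sequentially. real (b_before n) / real n * real n = real (b_before n)"
    by (intro eventually_sequentiallyI[of 1]) simp
  ultimately have "filterlim (\<lambda>n. real (b_before n)) at_top sequentially"
    using filterlim_cong by fastforce
  then have "filterlim b_before at_top sequentially"
    by (simp add: filterlim_sequentially_iff_filterlim_real)
  from filterlim_compose[OF freq_bb this]
  have "(\<lambda>n. real (occ bb 3 0 (b_before n)) / real (b_before n) * (real (b_before n) / real n))
      \<longlonglongrightarrow> \<gamma> * \<alpha>"
    by (intro tendsto_mult freq_u) (simp add: o_def)
  moreover have "real (occ bb 3 0 (b_before n)) / real (b_before n) * (real (b_before n) / real n)
      = real (occ v 3 0 n) / real n" for n
    by (cases "b_before n = 0") (simp_all add: occ_v b_before_def)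
  ultimately show ?thesis by (simp only:)
qed

lemma v_freq_2:
  assumes freq_u: "(\<lambda>n. real (b_before n) / real n) \<longlonglongrightarrow> \<alpha>" and "\<alpha> > 0"
    and freq_bb: "(\<lambda>m. real (occ bb 3 0 m) / real m) \<longlonglongrightarrow> \<gamma>"
  shows "(\<lambda>n. real (occ v 2 0 n) / real n) \<longlonglongrightarrow> \<alpha> - \<gamma> * \<alpha>"
proof -
  have "real (occ v 2 0 n) / real n = real (b_before n) / real n - real (occ v 3 0 n) / real n" for n
    using binary_occ_complement[where w = bb, OF bb_binary, of 0 "b_before n"] occ_le[of bb 3 0 "b_before n"]
    by (simp add: occ_v b_before_def of_nat_diff diff_divide_distrib)
  then show ?thesis
    using tendsto_diff[OF freq_u v_freq_3[OF assms]] by (simp only:)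
qed

lemma discrepancy_v_sum:
  "discrepancy v 1 f1 i + discrepancy v 2 f2 i + discrepancy v 3 f3 i = - (f1 + f2 + f3 - 1) * real i"
proof -
  have "occ v 1 0 i + occ v 2 0 i + occ v 3 0 i = i"
    using binary_occ_complement[where w = u, OF u_binary a_neq_b, of 0 i] occ_le[of u b 0 i]
      binary_occ_complement[where w = bb, OF bb_binary, of 0 "occ u b 0 i"] occ_le[of bb 3 0 "occ u b 0 i"]
    by (simp add: occ_v)
  then have "real (occ v 1 0 i) + real (occ v 2 0 i) + real (occ v 3 0 i) = real i"
    by (metis of_nat_add)
  then show ?thesis
    by (simp add: discrepancy_def algebra_simps)
qed

text \<open>The discrepancies of the three letters of \<open>v\<close> sum to zero, so the sum of two of them has the
  oscillation of the third.\<close>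

lemma balanced_colour_pair_oscillation:
  assumes bal: "C_balanced 1 v" and freq_u: "(\<lambda>n. real (b_before n) / real n) \<longlonglongrightarrow> \<alpha>"
    and "\<alpha> > 0" and freq_bb: "(\<lambda>m. real (occ bb 3 0 m) / real m) \<longlonglongrightarrow> \<gamma>"
  shows "\<bar>(discrepancy v 1 (1 - \<alpha>) i + discrepancy v 3 (\<gamma> * \<alpha>) i)
          - (discrepancy v 1 (1 - \<alpha>) j + discrepancy v 3 (\<gamma> * \<alpha>) j)\<bar> \<le> 1"
    and "\<bar>(discrepancy v 1 (1 - \<alpha>) i + discrepancy v 2 (\<alpha> - \<gamma> * \<alpha>) i)
          - (discrepancy v 1 (1 - \<alpha>) j + discrepancy v 2 (\<alpha> - \<gamma> * \<alpha>) j)\<bar> \<le> 1"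
proof -
  have sum: "discrepancy v 1 (1 - \<alpha>) k + discrepancy v 2 (\<alpha> - \<gamma> * \<alpha>) k + discrepancy v 3 (\<gamma> * \<alpha>) k = 0"
    for k
    using discrepancy_v_sum[of "1 - \<alpha>" k "\<alpha> - \<gamma> * \<alpha>" "\<gamma> * \<alpha>"] by simp
  show "\<bar>(discrepancy v 1 (1 - \<alpha>) i + discrepancy v 3 (\<gamma> * \<alpha>) i)
          - (discrepancy v 1 (1 - \<alpha>) j + discrepancy v 3 (\<gamma> * \<alpha>) j)\<bar> \<le> 1"
    using balanced_discrepancy_oscillation[OF bal v_freq_2[OF assms(2-4)], of j i] sum[of i] sum[of j]
    by (simp add: algebra_simps)
  show "\<bar>(discrepancy v 1 (1 - \<alpha>) i + discrepancy v 2 (\<alpha> - \<gamma> * \<alpha>) i)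
          - (discrepancy v 1 (1 - \<alpha>) j + discrepancy v 2 (\<alpha> - \<gamma> * \<alpha>) j)\<bar> \<le> 1"
    using balanced_discrepancy_oscillation[OF bal v_freq_3[OF assms(2-4)], of j i] sum[of i] sum[of j]
    by (simp add: algebra_simps)
qed

lemma colour_not_balanced_1:
  assumes freq_u: "(\<lambda>n. real (b_before n) / real n) \<longlonglongrightarrow> \<alpha>"
    and irr: "\<alpha> \<notin> \<rat>" and \<alpha>: "0 < \<alpha>" "\<alpha> < 1"
    and freq_bb: "(\<lambda>m. real (occ bb 3 0 m) / real m) \<longlonglongrightarrow> \<gamma>" and \<gamma>: "0 < \<gamma>" "\<gamma> < 1"
    and aper: "\<not> eventually_periodic bb"
    and excluded: "\<alpha> \<noteq> 1 / (1 + \<gamma>)" "\<alpha> \<noteq> 1 / (2 - \<gamma>)"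
  shows "\<not> C_balanced 1 v"
proof
  assume bal: "C_balanced 1 v"
  define f1 f3 where "f1 = 1 - \<alpha>" and "f3 = \<gamma> * \<alpha>"
  note pair_osc = balanced_colour_pair_oscillation[OF bal freq_u \<alpha>(1) freq_bb]
  have freq1: "(\<lambda>n. real (occ v 1 0 n) / real n) \<longlonglongrightarrow> f1"
    unfolding f1_def by (rule v_freq_1[OF freq_u])
  have freq3: "(\<lambda>n. real (occ v 3 0 n) / real n) \<longlonglongrightarrow> f3"
    unfolding f3_def by (rule v_freq_3[OF freq_u \<alpha>(1) freq_bb])
  have irr1: "f1 \<notin> \<rat>"
    using irr Rats_diff[of 1 f1] unfolding f1_def by auto
  have "\<gamma> * \<alpha> < \<alpha>"
    using \<alpha> \<gamma> by simp
  then have pos: "0 < f1" "0 < f3" "f1 + f3 < 1"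
    using \<alpha> \<gamma> unfolding f1_def f3_def by simp_all
  have "f1 = f3 \<or> 2 * f1 + f3 = 1 \<or> f1 + 2 * f3 = 1 \<or> f3 = 1/2 \<or> f1 + f3 = 1/2"
    using discrepancy_plus_Ints balanced_discrepancy_oscillation[OF bal freq1]
      balanced_discrepancy_oscillation[OF bal freq3] pair_osc(1) irr1 pos
    unfolding f1_def f3_def by (intro bounded_discrepancy_pair_relation)
  then show False
  proof (elim disjE)
    assume "f1 = f3"
    then have "\<alpha> = 1 / (1 + \<gamma>)"
      using \<gamma> unfolding f1_def f3_def by (simp add: field_simps)
    with excluded show False by simp
  next
    assume "2 * f1 + f3 = 1"
    then have "\<alpha> = 1 / (2 - \<gamma>)"
      using \<gamma> unfolding f1_def f3_def by (simp add: field_simps)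
    with excluded show False by simp
  next
    assume "f1 + 2 * f3 = 1"
    then have "\<gamma> = 1/2"
      using \<alpha> unfolding f1_def f3_def by (simp add: algebra_simps)
    with freq_bb have "(\<lambda>m. real (occ bb 3 0 m) / real m) \<longlonglongrightarrow> 1/2"
      by (simp only:)
    then have "eventually_periodic bb"
      using half_freq_balanced_binary_eventually_periodic[where w = bb and x = 3 and y = 2]
        bb_binary bb_balanced by blast
    with aper show False ..
  next
    assume half: "f3 = 1/2"
    with freq3 have "(\<lambda>n. real (occ v 3 0 n) / real n) \<longlonglongrightarrow> 1/2"
      by (simp only:)
    from balanced_half_freq_sum_oscillation[OF bal freq1 irr1 this] show False
      using pair_osc(1) unfolding f1_def f3_def[symmetric] half by (meson not_le)
  next
    assume "f1 + f3 = 1/2"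
    then have half: "\<alpha> - \<gamma> * \<alpha> = 1/2"
      unfolding f1_def f3_def by (simp add: algebra_simps)
    with v_freq_2[OF freq_u \<alpha>(1) freq_bb] have "(\<lambda>n. real (occ v 2 0 n) / real n) \<longlonglongrightarrow> 1/2"
      by (simp only:)
    from balanced_half_freq_sum_oscillation[OF bal freq1 irr1 this] show False
      using pair_osc(2) unfolding f1_def half by (meson not_le)
  qed
qed

end

theorem theorem2:
  fixes u :: "nat \<Rightarrow> 'a" and a b :: 'a and bb :: "nat \<Rightarrow> nat" and \<alpha> \<gamma> :: real
  assumes su: "sturmian u a b"
    and fu: "has_freq u b \<alpha>"
    and irr: "\<alpha> \<notin> \<rat>" and a01: "0 < \<alpha>" "\<alpha> < 1"
    and sb: "sturmian bb 2 3"
    and fb: "has_freq bb 3 \<gamma>" and g01: "0 < \<gamma>" "\<gamma> < 1"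
  defines "v \<equiv> colour u a (\<lambda>_. 1) bb"
  shows "C_balanced 2 v
    \<and> (\<alpha> \<notin> {1 / (1 + \<gamma>), 1 / (2 - \<gamma>)} \<longrightarrow> \<not> C_balanced 1 v)
    \<and> (\<forall>n\<ge>1. int (factor_complexity v n) \<le> int (P_alpha u a b \<alpha> n) + (int n + 1) * \<lceil>real n * \<alpha>\<rceil>
              \<and> abelian_complexity v n \<le> 4)"
proof -
  have "range u \<subseteq> {a, b}" "range bb \<subseteq> {2, 3}"
    using su sb by (simp_all add: sturmian_def)
  then interpret C: binary_colouring u a b bb
    using su sb by unfold_locales (auto simp: sturmian_def)
  have freq_u: "(\<lambda>n. real (C.b_before n) / real n) \<longlonglongrightarrow> \<alpha>"
    using fu by (simp add: has_freq_def C.b_before_def occ_def)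
  have freq_bb: "(\<lambda>m. real (occ bb 3 0 m) / real m) \<longlonglongrightarrow> \<gamma>"
    using fb by (simp add: has_freq_def occ_def)
  have "\<not> eventually_periodic bb"
    using sb by (simp add: sturmian_def)
  then show ?thesis
    unfolding v_def C.v_def[symmetric]
    using C.colour_balanced_2 C.colour_not_balanced_1[OF freq_u irr a01 freq_bb g01]
      C.colour_factor_complexity[OF freq_u irr a01(1)] C.colour_abelian_complexity
    by auto
qed

end
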